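(* Let $\mathcal{B}_4=(\mathbb{R}^4,\circ)$ be the Engel group, with group law $$(x_1,x_2,x_3,x_4)\circ(y_1,y_2,y_3,y_4)=\Big(x_1+y_1,\;x_2+y_2,\;x_3+y_3-x_1y_2,\;x_4+y_4+\tfrac12x_1^2y_2-x_1y_3\Big)$$ and Haar measure the Lebesgue measure $dx$ on $\mathbb{R}^4$. For $\lambda\neq0$, $\mu\in\mathbb{R}$, let $\pi_{\lambda,\mu}$ be the unitary operators on $L^2(\mathbb{R})$ given by $$\pi_{\lambda,\mu}(x)h(u)=\exp\Big(i\big(-\tfrac{\mu}{2\lambda}x_2+\lambda x_4-\lambda x_3u+\tfrac{\lambda}{2}x_2u^2\big)\Big)h(u+x_1),\qquad h\in L^2(\mathbb{R}),\ u\in\mathbb{R},$$ and for $f\in L^1(\mathcal{B}_4)$ (sufficiently regular, e.g. $f\in\mathcal{S}(\mathbb{R}^4)$) let $\mathcal{F}_{\mathcal{B}_4}(f)(\pi_{\lambda,\mu})=\pi_{\lambda,\mu}(f):=\int_{\mathcal{B}_4}f(x)\pi_{\lambda,\mu}(x)^*\,dx$. Then for every $h$ (e.g. $h\in\mathcal{S}(\mathbb{R})$) and $u\in\mathbb{R}$, $$\mathcal{F}_{\mathcal{B}_4}(f)(\pi_{\lambda,\mu})h(u)=\int_{\mathbb{R}^4} f(x)\exp\Big(i\big(\tfrac{\mu}{2\lambda}x_2-\lambda x_4+\lambda x_3(u-x_1)-\tfrac{\lambda}{2}x_2(u-x_1)^2\big)\Big)h(u-x_1)\,dx =2\pi\int_{\mathbb{R}}\int_{\mathbb{R}}e^{i(u-v)\xi}\,\mathcal{F}_{\mathbb{R}^4}(f)\Big(\xi,\tfrac{\lambda}{2}v^2-\tfrac{\mu}{2\lambda},-\lambda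 v,\lambda\Big)h(v)\,dv\,d\xi ,$$ that is, $\mathcal{F}_{\mathcal{B}_4}(f)(\pi_{\lambda,\mu})=\mathrm{Op}[a_{f,\lambda,\mu}]$, where $$a_{f,\lambda,\mu}(v,\xi)=(2\pi)^2\,\mathcal{F}_{\mathbb{R}^4}(f)\Big(\xi,\tfrac{\lambda}{2}v^2-\tfrac{\mu}{2\lambda},-\lambda v,\lambda\Big).$$
   Context: The Euclidean Fourier transform is normalized as $\mathcal{F}_{\mathbb{R}^4}f(\xi)=(2\pi)^{-2}\int_{\mathbb{R}^4}f(x)e^{-ix\cdot\xi}\,dx$. $\mathrm{Op}$ denotes the Kohn–Nirenberg quantization on $\mathbb{R}$: for a smooth symbol $a$ on $\mathbb{R}\times\mathbb{R}$, $\mathrm{Op}(a)f(u)=(2\pi)^{-1}\int_{\mathbb{R}}\int_{\mathbb{R}}e^{i(u-v)\xi}a(v,\xi)f(v)\,dv\,d\xi$ for $f\in\mathcal{S}(\mathbb{R})$, $u\in\mathbb{R}$. *)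

theory Defs
  imports "HOL-Analysis.Analysis"
begin

definition pderiv_vec :: "'n::finite \<Rightarrow> (real^'n \<Rightarrow> complex) \<Rightarrow> real^'n \<Rightarrow> complex" where
  "pderiv_vec i g x = vector_derivative (\<lambda>t. g (x + t *\<^sub>R axis i 1)) (at 0)"

fun iter_pderiv :: "'n::finite list \<Rightarrow> (real^'n \<Rightarrow> complex) \<Rightarrow> real^'n \<Rightarrow> complex" where
  "iter_pderiv [] g = g"
| "iter_pderiv (i # is) g = pderiv_vec i (iter_pderiv is g)"

definition schwartz_vec :: "(real^'n::finite \<Rightarrow> complex) \<Rightarrow> bool" where
  "schwartz_vec g \<longleftrightarrow>
     (\<forall>is. continuous_on UNIV (iter_pderiv is g)) \<and>
     (\<forall>is i x. (\<lambda>t. iter_pderiv is g (x + t *\<^sub>R axis i 1)) differentiable (at 0)) \<and>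
     (\<forall>is (k::nat). bounded (range (\<lambda>x. (1 + norm x) ^ k * cmod (iter_pderiv is g x))))"

definition dR :: "(real \<Rightarrow> complex) \<Rightarrow> real \<Rightarrow> complex" where
  "dR g = (\<lambda>x. vector_derivative g (at x))"

definition schwartz_R :: "(real \<Rightarrow> complex) \<Rightarrow> bool" where
  "schwartz_R g \<longleftrightarrow>
     (\<forall>k x. ((dR ^^ k) g) differentiable (at x)) \<and>
     (\<forall>k (m::nat). bounded (range (\<lambda>x. (1 + \<bar>x\<bar>) ^ m * cmod ((dR ^^ k) g x))))"

definition engel_pi :: "real \<Rightarrow> real \<Rightarrow> real^4 \<Rightarrow> (real \<Rightarrow> complex) \<Rightarrow> real \<Rightarrow> complex" where
  "engel_pi lam mu x h u =
     exp (\<i> * complex_of_real (- (mu / (2 * lam)) * x$2 + lam * x$4 - lam * x$3 * u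
                               + (lam / 2) * x$2 * u\<^sup>2)) * h (u + x$1)"

text \<open>Adjoint of the unitary operator pi_{lambda,mu}(x): for a unitary operator the adjoint is
  its inverse; engel_pi lam mu x is a bijection on functions real \<Rightarrow> complex.\<close>
definition engel_pi_adj :: "real \<Rightarrow> real \<Rightarrow> real^4 \<Rightarrow> (real \<Rightarrow> complex) \<Rightarrow> real \<Rightarrow> complex" where
  "engel_pi_adj lam mu x = inv (engel_pi lam mu x)"

definition engel_FT :: "(real^4 \<Rightarrow> complex) \<Rightarrow> real \<Rightarrow> real \<Rightarrow> (real \<Rightarrow> complex) \<Rightarrow> real \<Rightarrow> complex" where
  "engel_FT f lam mu h u = (LINT x|lborel. f x * engel_pi_adj lam mu x h u)"

definition fourier4 :: "(real^4 \<Rightarrow> complex) \<Rightarrow> real^4 \<Rightarrow> complex" where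
  "fourier4 f \<xi> = complex_of_real ((2 * pi) powi (-2)) *
      (LINT x|lborel. f x * exp (- (\<i> * complex_of_real (x \<bullet> \<xi>))))"

text \<open>Kohn--Nirenberg quantization on R (inner integral in v, outer in xi).\<close>
definition KN_Op :: "(real \<Rightarrow> real \<Rightarrow> complex) \<Rightarrow> (real \<Rightarrow> complex) \<Rightarrow> real \<Rightarrow> complex" where
  "KN_Op a g u = complex_of_real (1 / (2 * pi)) *
      (LINT \<xi>|lborel. (LINT v|lborel. exp (\<i> * complex_of_real ((u - v) * \<xi>)) * a v \<xi> * g v))"

definition engel_symbol :: "(real^4 \<Rightarrow> complex) \<Rightarrow> real \<Rightarrow> real \<Rightarrow> real \<Rightarrow> real \<Rightarrow> complex" where
  "engel_symbol f lam mu v \<xi> =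
     complex_of_real ((2 * pi)\<^sup>2) *
       fourier4 f (vector [\<xi>, (lam / 2) * v\<^sup>2 - mu / (2 * lam), - lam * v, lam])"

end

theory Submission
  imports Defs "HOL-Probability.Probability"
begin

(* Inverting pi_{lam,mu}(x) gives the first formula. For the second, write the point at which the
   symbol evaluates the Fourier transform of f as xi e_1 + c(v), so that
   x . (xi e_1 + c(v)) = x_1 xi + x . c(v). Then the inner v-integral is e^{i u xi} times the
   Fourier transform at xi of Phi(w) = int f(x) e^{-i x . c(w - x_1)} h(w - x_1) dx, and the
   xi-integral is a one-dimensional Fourier inversion returning 2 pi Phi(u). Fourier inversion on
   the real line is proved by Gaussian regularisation; the integrability in xi that it needs comes
   from the decay of the Euclidean Fourier transform of f in its first variable, obtained from a
   second difference of f in the direction e_1. *)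

lemma lborel_integrable_inverse_1_plus_square:
  "integrable lborel (\<lambda>x::real. inverse (1 + x\<^sup>2))"
  using integrable_inverse_1_plus_square by (simp add: set_integrable_def)

lemma lborel_integrable_inverse_1_plus_norm_power:
  "integrable lborel (\<lambda>x::'a::euclidean_space. inverse ((1 + norm x) ^ (2 * DIM('a))))"
proof (rule Bochner_Integration.integrable_bound)
  let ?p = "\<lambda>x::'a. \<Prod>b\<in>Basis. inverse (1 + (x \<bullet> b)\<^sup>2)"
  have "(\<integral>\<^sup>+x. ennreal (?p x) \<partial>lborel)
      = (\<integral>\<^sup>+x. (\<Prod>b\<in>Basis. ennreal (inverse (1 + ((x::'a) \<bullet> b)\<^sup>2))) \<partial>lborel)"
    by (intro nn_integral_cong) (simp add: prod_ennreal)
  also have "\<dots> = (\<Prod>b\<in>(Basis::'a set). \<integral>\<^sup>+t. ennreal (inverse (1 + t\<^sup>2)) \<partial>lborel)"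
    by (rule nn_integral_lborel_prod) auto
  also have "\<dots> < \<infinity>"
    using lborel_integrable_inverse_1_plus_square
    by (simp add: power_less_top_ennreal integrable_iff_bounded)
  finally show "integrable lborel ?p"
    by (intro integrableI_nonneg) (auto intro!: prod_nonneg)
  show "AE x in lborel. norm (inverse ((1 + norm x) ^ (2 * DIM('a)))) \<le> norm (?p x)"
  proof (intro AE_I2)
    fix x :: 'a
    have "(\<Prod>b\<in>(Basis::'a set). 1 + (x \<bullet> b)\<^sup>2) \<le> (\<Prod>b\<in>(Basis::'a set). (1 + norm x)\<^sup>2)"
    proof (rule prod_mono)
      fix b :: 'a assume "b \<in> Basis"
      then have "\<bar>x \<bullet> b\<bar> \<le> norm x" by (rule Basis_le_norm)
      then have "(x \<bullet> b)\<^sup>2 \<le> (norm x)\<^sup>2" using power_mono[OF _ abs_ge_zero, of _ _ 2] by fastforce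
      then show "0 \<le> 1 + (x \<bullet> b)\<^sup>2 \<and> 1 + (x \<bullet> b)\<^sup>2 \<le> (1 + norm x)\<^sup>2"
        by (simp add: power2_eq_square algebra_simps add_increasing2)
    qed
    then have "inverse ((1 + norm x) ^ (2 * DIM('a))) \<le> inverse (\<Prod>b\<in>(Basis::'a set). 1 + (x \<bullet> b)\<^sup>2)"
      by (intro le_imp_inverse_le) (auto simp: power_mult intro!: prod_pos add_pos_nonneg)
    then show "norm (inverse ((1 + norm x) ^ (2 * DIM('a)))) \<le> norm (?p x)"
      by (simp add: prod_inversef[symmetric] o_def prod_nonneg)
  qed
qed measurable

lemma inverse_1_plus_norm_power_shift:
  fixes x c :: "'a::real_normed_vector"
  assumes "norm c \<le> 1"
  shows "inverse ((1 + norm (x + c)) ^ k) \<le> 2 ^ k * inverse ((1 + norm x) ^ k)"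
proof -
  have "1 + norm x \<le> 2 * (1 + norm (x + c))"
    using norm_triangle_ineq4[of "x + c" c, simplified] norm_ge_zero[of "x + c"] assms by argo
  then have "(1 + norm x) ^ k \<le> 2 ^ k * (1 + norm (x + c)) ^ k"
    by (metis power_mono power_mult_distrib add_nonneg_nonneg norm_ge_zero zero_le_one)
  then show ?thesis
    by (simp add: field_simps add_pos_nonneg)
qed

lemma lborel_integral_translate:
  fixes g :: "'a::euclidean_space \<Rightarrow> 'b::{banach, second_countable_topology}"
  assumes "g \<in> borel_measurable borel"
  shows "(LINT x|lborel. g (x + c)) = integral\<^sup>L lborel g"
  using integral_distr[of "(+) c" lborel borel g, symmetric] assms
  by (simp add: lborel_distr_plus add.commute)

lemma lborel_integrable_translate:
  fixes g :: "'a::euclidean_space \<Rightarrow> 'b::{banach, second_countable_topology}"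
  assumes "integrable lborel g"
  shows "integrable lborel (\<lambda>x. g (x + c))"
  using integrable_distr_eq[of "(+) c" lborel borel g] assms
  by (simp add: lborel_distr_plus add.commute)

lemma lborel_integral_swap:
  fixes F :: "'a::euclidean_space \<Rightarrow> 'b::euclidean_space \<Rightarrow> 'c::{banach, second_countable_topology}"
  assumes "(\<lambda>(a, b). F a b) \<in> borel_measurable borel"
    and "\<And>a. integrable lborel (F a)"
    and "integrable lborel (\<lambda>a. LINT b|lborel. norm (F a b))"
  shows "integrable lborel (\<lambda>b. LINT a|lborel. F a b)"
    and "(LINT a|lborel. LINT b|lborel. F a b) = (LINT b|lborel. LINT a|lborel. F a b)"
proof -
  have int: "integrable (lborel \<Otimes>\<^sub>M lborel) (\<lambda>(a, b). F a b)"
    using assms by (intro lborel_pair.Fubini_integrable) (auto simp: lborel_prod)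
  show "integrable lborel (\<lambda>b. LINT a|lborel. F a b)"
    using lborel_pair.integrable_fst'[OF lborel_pair.integrable_product_swap[OF int]] by simp
  show "(LINT a|lborel. LINT b|lborel. F a b) = (LINT b|lborel. LINT a|lborel. F a b)"
    using lborel_pair.Fubini_integral[OF int] by simp
qed

lemma lborel_integral_swap_product_bound:
  fixes F :: "'a::euclidean_space \<Rightarrow> 'b::euclidean_space \<Rightarrow> 'c::{banach, second_countable_topology}"
  assumes meas: "(\<lambda>(a, b). F a b) \<in> borel_measurable borel"
    and P: "integrable lborel P" and Q: "integrable lborel Q"
    and bound: "\<And>a b. norm (F a b) \<le> P a * Q b"
  shows "(LINT a|lborel. LINT b|lborel. F a b) = (LINT b|lborel. LINT a|lborel. F a b)"
proof (rule lborel_integral_swap(2)[OF meas])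
  have [measurable]: "(\<lambda>(a, b). F a b) \<in> borel_measurable (lborel \<Otimes>\<^sub>M lborel)"
    using meas by (simp add: lborel_prod)
  show Fa: "integrable lborel (F a)" for a
    by (rule Bochner_Integration.integrable_bound[OF integrable_mult_right[OF Q, of "P a"]])
       (auto intro: order_trans[OF bound abs_ge_self])
  show "integrable lborel (\<lambda>a. LINT b|lborel. norm (F a b))"
  proof (rule Bochner_Integration.integrable_bound[OF integrable_mult_left[OF P, of "integral\<^sup>L lborel Q"]])
    show "AE a in lborel. norm (LINT b|lborel. norm (F a b)) \<le> norm (P a * integral\<^sup>L lborel Q)"
    proof (intro AE_I2)
      fix a
      have "(LINT b|lborel. norm (F a b)) \<le> (LINT b|lborel. P a * Q b)"
        using Fa Q bound by (intro integral_mono) auto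
      then show "norm (LINT b|lborel. norm (F a b)) \<le> norm (P a * integral\<^sup>L lborel Q)"
        by simp
    qed
  qed measurable
qed

lemma lborel_integrable_of_decay:
  fixes g :: "'a::euclidean_space \<Rightarrow> 'b::{banach, second_countable_topology}"
  assumes "g \<in> borel_measurable borel"
    and "\<And>x. norm (g x) \<le> C * inverse ((1 + norm x) ^ (2 * DIM('a)))"
  shows "integrable lborel g"
proof (rule Bochner_Integration.integrable_bound)
  show "integrable lborel (\<lambda>x::'a. C * inverse ((1 + norm x) ^ (2 * DIM('a))))"
    using lborel_integrable_inverse_1_plus_norm_power by (rule integrable_mult_right)
  show "AE x in lborel. norm (g x) \<le> norm (C * inverse ((1 + norm x) ^ (2 * DIM('a))))"
    using assms(2) by (auto intro!: AE_I2 order_trans[OF _ abs_ge_self])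
qed (use assms(1) in simp)

lemma continuous_on_lborel_integral_param:
  fixes G :: "'c::metric_space \<Rightarrow> 'a::euclidean_space \<Rightarrow> 'b::{banach, second_countable_topology}"
  assumes meas: "\<And>w. G w \<in> borel_measurable lborel"
    and cont: "\<And>x. continuous_on UNIV (\<lambda>w. G w x)"
    and bound: "\<And>w x. norm (G w x) \<le> B x" and B: "integrable lborel B"
  shows "continuous_on UNIV (\<lambda>w. LINT x|lborel. G w x)"
  unfolding continuous_on_eq_continuous_at[OF open_UNIV] continuous_at_sequentially comp_def
proof (intro ballI allI impI)
  fix w and X :: "nat \<Rightarrow> 'c" assume "X \<longlonglongrightarrow> w"
  show "(\<lambda>n. LINT x|lborel. G (X n) x) \<longlonglongrightarrow> (LINT x|lborel. G w x)"
  proof (rule integral_dominated_convergence[where w=B])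
    show "AE x in lborel. (\<lambda>n. G (X n) x) \<longlonglongrightarrow> G w x"
      using cont \<open>X \<longlonglongrightarrow> w\<close>
      by (intro AE_I2 continuous_on_tendsto_compose[of UNIV "\<lambda>w. G w _"]) auto
  qed (use meas bound B in auto)
qed

lemma schwartz_vec_decay:
  assumes "schwartz_vec f"
  obtains C where "\<And>x. cmod (iter_pderiv js f x) \<le> C * inverse ((1 + norm x) ^ k)"
proof -
  obtain C where "\<And>x. norm ((1 + norm x) ^ k * cmod (iter_pderiv js f x)) \<le> C"
    using assms unfolding schwartz_vec_def bounded_iff by blast
  then have "cmod (iter_pderiv js f x) \<le> C * inverse ((1 + norm x) ^ k)" for x
    using add_pos_nonneg[OF zero_less_one norm_ge_zero[of x]]
    by (simp add: field_simps abs_mult)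
  then show thesis by (rule that)
qed

lemma schwartz_vec_continuous: "schwartz_vec f \<Longrightarrow> continuous_on UNIV f"
  unfolding schwartz_vec_def by (metis iter_pderiv.simps(1))

lemma schwartz_vec_integrable:
  fixes f :: "real^'n::finite \<Rightarrow> complex"
  assumes "schwartz_vec f"
  shows "integrable lborel f"
proof -
  obtain C where "\<And>x. cmod (iter_pderiv [] f x) \<le> C * inverse ((1 + norm x) ^ (2 * DIM(real^'n)))"
    using schwartz_vec_decay[OF assms] by blast
  then show ?thesis
    using schwartz_vec_continuous[OF assms]
    by (intro lborel_integrable_of_decay borel_measurable_continuous_onI) auto
qed

lemma schwartz_vec_has_vector_derivative_line:
  assumes "schwartz_vec f"
  shows "((\<lambda>s. iter_pderiv js f (x + s *\<^sub>R axis i 1)) has_vector_derivative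
           iter_pderiv (i # js) f (x + s *\<^sub>R axis i 1)) (at s)"
proof -
  let ?e = "axis i 1" and ?g = "\<lambda>t. iter_pderiv js f (x + s *\<^sub>R axis i 1 + t *\<^sub>R axis i 1)"
  have "?g differentiable (at 0)"
    using assms unfolding schwartz_vec_def by blast
  then have "(?g has_vector_derivative iter_pderiv (i # js) f (x + s *\<^sub>R ?e)) (at (s - s))"
    by (simp add: pderiv_vec_def vector_derivative_works)
  moreover have "((\<lambda>r. r - s) has_vector_derivative 1) (at s)"
    by (auto intro!: derivative_eq_intros)
  ultimately have "((?g \<circ> (\<lambda>r. r - s)) has_vector_derivative iter_pderiv (i # js) f (x + s *\<^sub>R ?e)) (at s)"
    using vector_diff_chain_at[of "\<lambda>r. r - s" 1 s ?g] by simp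
  moreover have "?g \<circ> (\<lambda>r. r - s) = (\<lambda>r. iter_pderiv js f (x + r *\<^sub>R ?e))"
    by (auto simp: o_def algebra_simps)
  ultimately show ?thesis by simp
qed

lemma schwartz_R_decay:
  assumes "schwartz_R h"
  obtains C where "\<And>x. cmod (h x) \<le> C * inverse ((1 + \<bar>x\<bar>) ^ k)"
proof -
  obtain C where "\<And>x. norm ((1 + \<bar>x\<bar>) ^ k * cmod ((dR ^^ 0) h x)) \<le> C"
    using assms unfolding schwartz_R_def bounded_iff by blast
  then have "cmod (h x) \<le> C * inverse ((1 + \<bar>x\<bar>) ^ k)" for x
    using add_pos_nonneg[OF zero_less_one abs_ge_zero[of x]]
    by (simp add: field_simps abs_mult)
  then show thesis by (rule that)
qed

lemma schwartz_R_bounded: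
  assumes "schwartz_R h"
  obtains H where "\<And>x. cmod (h x) \<le> H"
  using schwartz_R_decay[OF assms, of 0] by auto

lemma schwartz_R_continuous: "schwartz_R h \<Longrightarrow> continuous_on UNIV h"
  unfolding schwartz_R_def
  by (metis funpow_0 differentiable_imp_continuous_within continuous_at_imp_continuous_on)

lemma schwartz_R_integrable:
  assumes "schwartz_R h"
  shows "integrable lborel h"
proof -
  obtain C where "\<And>x. cmod (h x) \<le> C * inverse ((1 + \<bar>x\<bar>) ^ 2)"
    using schwartz_R_decay[OF assms] by blast
  then show ?thesis
    using schwartz_R_continuous[OF assms]
    by (intro lborel_integrable_of_decay borel_measurable_continuous_onI) auto
qed

section \<open>Decay of the Fourier transform\<close>

definition fourier_integral :: "('a::euclidean_space \<Rightarrow> complex) \<Rightarrow> 'a \<Rightarrow> complex" where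
  "fourier_integral g \<eta> = (LINT x|lborel. g x * exp (- (\<i> * complex_of_real (x \<bullet> \<eta>))))"

lemma norm_exp_minus_i_times: "cmod (exp (- (\<i> * complex_of_real r))) = 1"
  using norm_exp_i_times[of "- r"] by simp

lemma fourier_integral_norm_le: "cmod (fourier_integral g \<eta>) \<le> (LINT x|lborel. cmod (g x))"
  unfolding fourier_integral_def
  using integral_norm_bound[of lborel "\<lambda>x. g x * exp (- (\<i> * complex_of_real (x \<bullet> \<eta>)))"]
  by (simp add: norm_mult norm_exp_minus_i_times)

lemma integrable_fourier_integrand:
  "integrable lborel g \<Longrightarrow> integrable lborel (\<lambda>x. g x * exp (- (\<i> * complex_of_real (x \<bullet> \<eta>))))"
  by (rule Bochner_Integration.integrable_bound[where f=g]) (auto simp: norm_mult norm_exp_minus_i_times)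

lemma fourier_integral_shift:
  assumes "integrable lborel g"
  shows "fourier_integral (\<lambda>x. g (x + c)) \<eta> = exp (\<i> * complex_of_real (c \<bullet> \<eta>)) * fourier_integral g \<eta>"
proof -
  have [measurable]: "g \<in> borel_measurable borel" using assms by simp
  have "fourier_integral g \<eta> = (LINT x|lborel. g (x + c) * exp (- (\<i> * complex_of_real ((x + c) \<bullet> \<eta>))))"
    unfolding fourier_integral_def by (rule lborel_integral_translate[symmetric]) measurable
  also have "\<dots> = exp (- (\<i> * complex_of_real (c \<bullet> \<eta>))) * fourier_integral (\<lambda>x. g (x + c)) \<eta>"
    unfolding fourier_integral_def integral_mult_right_zero[symmetric]
    by (intro Bochner_Integration.integral_cong refl)
       (simp add: inner_add_left distrib_left exp_add[symmetric] mult_ac)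
  finally show ?thesis by (simp add: exp_minus field_simps)
qed

lemma second_difference_bound:
  fixes g g' g'' :: "real \<Rightarrow> 'a::real_normed_vector"
  assumes g: "\<And>s. (g has_vector_derivative g' s) (at s)"
    and g': "\<And>s. (g' has_vector_derivative g'' s) (at s)"
    and M: "\<And>s. \<bar>s\<bar> \<le> 2 * \<bar>t\<bar> \<Longrightarrow> norm (g'' s) \<le> M"
  shows "norm (g 0 - 2 *\<^sub>R g t + g (2 * t)) \<le> 2 * M * t\<^sup>2"
proof -
  define S where "S = {- 2 * \<bar>t\<bar> .. 2 * \<bar>t\<bar>}"
  have "0 \<le> M" using M[of 0] by (simp add: order_trans[OF norm_ge_zero])
  have lip: "norm (g' s - g' t) \<le> M * \<bar>t\<bar>" if "\<bar>s - t\<bar> \<le> \<bar>t\<bar>" for s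
  proof -
    have "norm (g' s - g' t) \<le> M * norm (s - t)"
    proof (rule differentiable_bound[where S=S and f'="\<lambda>x h. h *\<^sub>R g'' x"])
      show "(g' has_derivative (\<lambda>h. h *\<^sub>R g'' x)) (at x within S)" for x
        using g'[of x] by (simp add: has_vector_derivative_def has_derivative_at_withinI)
      show "onorm (\<lambda>h. h *\<^sub>R g'' x) \<le> M" if "x \<in> S" for x
        using that M[of x] by (simp add: onorm_scaleR_left[of "\<lambda>h. h", simplified] onorm_id S_def abs_le_iff)
    qed (use that in \<open>auto simp: S_def\<close>)
    also have "\<dots> \<le> M * \<bar>t\<bar>" using that \<open>0 \<le> M\<close> by (simp add: mult_left_mono)
    finally show ?thesis .
  qed
  have lin: "norm (g b - g t - (b - t) *\<^sub>R g' t) \<le> M * t\<^sup>2" if "\<bar>b - t\<bar> = \<bar>t\<bar>" for b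
  proof -
    have "norm (g b - g t - (b - t) *\<^sub>R g' t) \<le> norm (b - t) * (M * \<bar>t\<bar>)"
    proof (rule vector_differentiable_bound_linearization[where S="closed_segment t b"])
      show "(g has_vector_derivative g' x) (at x within closed_segment t b)" for x
        using g by (rule has_vector_derivative_at_within)
      show "norm (g' x - g' t) \<le> M * \<bar>t\<bar>" if "x \<in> closed_segment t b" for x
        using that \<open>\<bar>b - t\<bar> = \<bar>t\<bar>\<close> by (intro lip) (auto simp: closed_segment_eq_real_ivl split: if_splits)
    qed auto
    then show ?thesis using that by (simp add: power2_eq_square mult_ac)
  qed
  have "g 0 - 2 *\<^sub>R g t + g (2 * t)
      = (g (2 * t) - g t - (2 * t - t) *\<^sub>R g' t) + (g 0 - g t - (0 - t) *\<^sub>R g' t)"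
    by (simp add: algebra_simps scaleR_2)
  also have "norm \<dots> \<le> M * t\<^sup>2 + M * t\<^sup>2"
    by (intro order_trans[OF norm_triangle_ineq] add_mono lin) auto
  finally show ?thesis by simp
qed

lemma fourier_integral_second_difference_bound:
  fixes f f' f'' :: "'a::euclidean_space \<Rightarrow> complex"
  assumes f: "integrable lborel f" and B: "integrable lborel B"
    and f': "\<And>x s. ((\<lambda>s. f (x + s *\<^sub>R e)) has_vector_derivative f' (x + s *\<^sub>R e)) (at s)"
    and f'': "\<And>x s. ((\<lambda>s. f' (x + s *\<^sub>R e)) has_vector_derivative f'' (x + s *\<^sub>R e)) (at s)"
    and bound: "\<And>x s. \<bar>s\<bar> \<le> 1 \<Longrightarrow> cmod (f'' (x + s *\<^sub>R e)) \<le> B x"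
    and \<eta>: "2 * pi \<le> \<bar>e \<bullet> \<eta>\<bar>"
  shows "(e \<bullet> \<eta>)\<^sup>2 * cmod (fourier_integral f \<eta>) \<le> pi\<^sup>2 / 2 * integral\<^sup>L lborel B"
proof -
  \<comment> \<open>Shifting by \<open>t e\<close> with \<open>t (e \<bullet> \<eta>) = pi\<close> multiplies the Fourier integral by \<open>-1\<close>, so the
    second difference \<open>D\<close> has Fourier integral \<open>4 * fourier_integral f \<eta>\<close>, while \<open>\<bar>D\<bar> = O(t\<^sup>2)\<close>.\<close>
  define t where "t = pi / (e \<bullet> \<eta>)"
  have "e \<bullet> \<eta> \<noteq> 0" using \<eta> pi_gt_zero by linarith
  then have te: "(t *\<^sub>R e) \<bullet> \<eta> = pi" "((2 * t) *\<^sub>R e) \<bullet> \<eta> = 2 * pi"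
    by (simp_all add: t_def)
  have t: "2 * \<bar>t\<bar> \<le> 1"
    using \<eta> pi_gt_zero by (simp add: t_def abs_divide field_simps divide_le_eq_1)
  define D where "D x = f x - 2 * f (x + t *\<^sub>R e) + f (x + (2 * t) *\<^sub>R e)" for x
  have shifts: "integrable lborel (\<lambda>x. f (x + c))" for c
    using f by (rule lborel_integrable_translate)
  have "fourier_integral D \<eta>
      = fourier_integral f \<eta> - 2 * fourier_integral (\<lambda>x. f (x + t *\<^sub>R e)) \<eta>
        + fourier_integral (\<lambda>x. f (x + (2 * t) *\<^sub>R e)) \<eta>"
    unfolding fourier_integral_def D_def
    using f shifts by (simp add: ring_distribs integrable_fourier_integrand mult.assoc)
  also have "\<dots> = 4 * fourier_integral f \<eta>"
    unfolding fourier_integral_shift[OF f] te by (simp add: mult.commute)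
  finally have FD: "fourier_integral D \<eta> = 4 * fourier_integral f \<eta>" .
  have "cmod (D x) \<le> 2 * B x * t\<^sup>2" for x
  proof -
    have "norm (f (x + 0 *\<^sub>R e) - 2 *\<^sub>R f (x + t *\<^sub>R e) + f (x + (2 * t) *\<^sub>R e)) \<le> 2 * B x * t\<^sup>2"
      using t by (intro second_difference_bound[OF f' f''] bound) auto
    then show ?thesis by (simp add: D_def scaleR_conv_of_real)
  qed
  then have "(LINT x|lborel. cmod (D x)) \<le> (LINT x|lborel. 2 * B x * t\<^sup>2)"
    using B f shifts by (intro integral_mono) (auto simp: D_def)
  then have "4 * cmod (fourier_integral f \<eta>) \<le> 2 * t\<^sup>2 * integral\<^sup>L lborel B"
    using fourier_integral_norm_le[of D \<eta>] by (simp add: FD norm_mult mult_ac)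
  then have "(e \<bullet> \<eta>)\<^sup>2 * (4 * cmod (fourier_integral f \<eta>))
      \<le> (e \<bullet> \<eta>)\<^sup>2 * (2 * t\<^sup>2 * integral\<^sup>L lborel B)"
    by (rule mult_left_mono) simp
  also have "\<dots> = 2 * pi\<^sup>2 * integral\<^sup>L lborel B"
    using \<open>e \<bullet> \<eta> \<noteq> 0\<close> by (simp add: t_def power_divide)
  finally show ?thesis by (simp add: mult_ac)
qed

lemma schwartz_vec_fourier_high_frequency:
  fixes f :: "real^'n::finite \<Rightarrow> complex"
  assumes sf: "schwartz_vec f"
  obtains K where "\<And>\<eta>. 2 * pi \<le> \<bar>\<eta> $ i\<bar> \<Longrightarrow> (\<eta> $ i)\<^sup>2 * cmod (fourier_integral f \<eta>) \<le> K"
proof -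
  define w where "w x = inverse ((1 + norm x) ^ (2 * DIM(real^'n)))" for x :: "real^'n"
  obtain C where C: "\<And>x. cmod (iter_pderiv [i, i] f x) \<le> C * w x"
    using schwartz_vec_decay[OF sf, where js="[i, i]" and k="2 * DIM(real^'n)"] unfolding w_def by blast
  have "0 \<le> C" using C[of 0] by (simp add: w_def order_trans[OF norm_ge_zero])
  define B where "B x = C * (2 ^ (2 * DIM(real^'n)) * w x)" for x
  have B: "integrable lborel B"
    unfolding B_def w_def by (intro integrable_mult_right lborel_integrable_inverse_1_plus_norm_power)
  have bound: "cmod (iter_pderiv [i, i] f (x + s *\<^sub>R axis i 1)) \<le> B x" if "\<bar>s\<bar> \<le> 1" for x s
    using C[of "x + s *\<^sub>R axis i 1"] inverse_1_plus_norm_power_shift[of "s *\<^sub>R axis i 1" x] that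
    unfolding B_def w_def by (auto intro: order_trans mult_left_mono[OF _ \<open>0 \<le> C\<close>])
  have d0: "((\<lambda>s. f (x + s *\<^sub>R axis i 1)) has_vector_derivative iter_pderiv [i] f (x + s *\<^sub>R axis i 1)) (at s)"
    for x s using schwartz_vec_has_vector_derivative_line[OF sf, where js="[]" and i=i] by simp
  note d1 = schwartz_vec_has_vector_derivative_line[OF sf, where js="[i]" and i=i]
  show thesis
  proof (rule that)
    fix \<eta> :: "real^'n"
    assume "2 * pi \<le> \<bar>\<eta> $ i\<bar>"
    then show "(\<eta> $ i)\<^sup>2 * cmod (fourier_integral f \<eta>) \<le> pi\<^sup>2 / 2 * integral\<^sup>L lborel B"
      using fourier_integral_second_difference_bound[OF schwartz_vec_integrable[OF sf] B d0 d1 bound]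
      by (simp add: inner_axis')
  qed
qed

lemma schwartz_vec_fourier_decay:
  fixes f :: "real^'n::finite \<Rightarrow> complex"
  assumes sf: "schwartz_vec f"
  obtains C where "\<And>\<eta>. cmod (fourier_integral f \<eta>) \<le> C / (1 + \<bar>\<eta> $ i\<bar>)\<^sup>2"
proof -
  obtain K where high: "\<And>\<eta>. 2 * pi \<le> \<bar>\<eta> $ i\<bar> \<Longrightarrow> (\<eta> $ i)\<^sup>2 * cmod (fourier_integral f \<eta>) \<le> K"
    using schwartz_vec_fourier_high_frequency[OF sf] by blast
  define N where "N = (LINT x|lborel. cmod (f x))"
  show thesis
  proof (rule that[of "max (4 * K) ((1 + 2 * pi)\<^sup>2 * N)"])
    fix \<eta> :: "real^'n"
    define a where "a = \<bar>\<eta> $ i\<bar>"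
    have "(1 + a)\<^sup>2 * cmod (fourier_integral f \<eta>) \<le> max (4 * K) ((1 + 2 * pi)\<^sup>2 * N)"
    proof (cases "2 * pi \<le> a")
      case True
      then have "1 + a \<le> 2 * a" "0 \<le> 1 + a" using pi_gt3 by linarith+
      then have "(1 + a)\<^sup>2 \<le> 4 * a\<^sup>2"
        using power_mono[of "1 + a" "2 * a" 2] by (simp add: power_mult_distrib)
      then have "(1 + a)\<^sup>2 * cmod (fourier_integral f \<eta>) \<le> 4 * (a\<^sup>2 * cmod (fourier_integral f \<eta>))"
        by (metis mult.assoc mult_right_mono norm_ge_zero)
      also have "\<dots> \<le> 4 * K" using high[of \<eta>] True by (simp add: a_def)
      finally show ?thesis by simp
    next
      case False
      then have "(1 + a)\<^sup>2 \<le> (1 + 2 * pi)\<^sup>2" by (simp add: a_def power_mono)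
      moreover have "cmod (fourier_integral f \<eta>) \<le> N"
        unfolding N_def by (rule fourier_integral_norm_le)
      ultimately have "(1 + a)\<^sup>2 * cmod (fourier_integral f \<eta>) \<le> (1 + 2 * pi)\<^sup>2 * N"
        by (intro mult_mono) auto
      then show ?thesis by simp
    qed
    then show "cmod (fourier_integral f \<eta>) \<le> max (4 * K) ((1 + 2 * pi)\<^sup>2 * N) / (1 + \<bar>\<eta> $ i\<bar>)\<^sup>2"
      by (simp add: a_def pos_le_divide_eq add_pos_nonneg mult.commute)
  qed
qed

section \<open>Fourier inversion on the real line\<close>

lemma integrable_gaussian:
  assumes "0 < \<sigma>"
  shows "integrable lborel (\<lambda>\<xi>::real. exp (- (\<sigma>\<^sup>2 * \<xi>\<^sup>2) / 2))"
proof -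
  have "integrable lborel (\<lambda>\<xi>. sqrt (2 * pi) * std_normal_density (0 + \<sigma> * \<xi>))"
    using assms by (intro integrable_mult_right lborel_integrable_real_affine) auto
  then show ?thesis
    by (simp add: std_normal_density_def power_mult_distrib)
qed

lemma integral_gaussian_exp_i_times:
  assumes s: "0 < \<sigma>"
  shows "(LINT \<xi>|lborel. complex_of_real (exp (- (\<sigma>\<^sup>2 * \<xi>\<^sup>2) / 2)) * exp (\<i> * complex_of_real (a * \<xi>)))
         = complex_of_real (2 * pi / \<sigma> * std_normal_density (a / \<sigma>))"
proof -
  have "char std_normal_distribution (a / \<sigma>)
      = (LINT y|lborel. std_normal_density y *\<^sub>R exp (\<i> * complex_of_real (a / \<sigma> * y)))"
    unfolding char_def by (subst integral_density) auto
  also have "\<dots> = complex_of_real (1 / sqrt (2 * pi)) *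
      (LINT y|lborel. complex_of_real (exp (- y\<^sup>2 / 2)) * exp (\<i> * complex_of_real (a / \<sigma> * y)))"
    unfolding integral_mult_right_zero[symmetric]
    by (intro Bochner_Integration.integral_cong) (simp_all add: std_normal_density_def scaleR_conv_of_real)
  finally have char: "(LINT y|lborel. complex_of_real (exp (- y\<^sup>2 / 2)) * exp (\<i> * complex_of_real (a / \<sigma> * y)))
      = complex_of_real (sqrt (2 * pi) * exp (- (a / \<sigma>)\<^sup>2 / 2))"
    by (simp add: char_std_normal_distribution field_simps)
  have "(LINT \<xi>|lborel. complex_of_real (exp (- (\<sigma>\<^sup>2 * \<xi>\<^sup>2) / 2)) * exp (\<i> * complex_of_real (a * \<xi>)))
      = \<bar>1 / \<sigma>\<bar> *\<^sub>R (LINT y|lborel. complex_of_real (exp (- (\<sigma>\<^sup>2 * (0 + 1 / \<sigma> * y)\<^sup>2) / 2))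
                                  * exp (\<i> * complex_of_real (a * (0 + 1 / \<sigma> * y))))"
    using s by (intro lborel_integral_real_affine) simp
  also have "\<dots> = (1 / \<sigma>) *\<^sub>R complex_of_real (sqrt (2 * pi) * exp (- (a / \<sigma>)\<^sup>2 / 2))"
    unfolding char[symmetric] using s
    by (intro arg_cong2[where f=scaleR] Bochner_Integration.integral_cong) (simp_all add: power_divide)
  also have "\<dots> = complex_of_real (2 * pi / \<sigma> * std_normal_density (a / \<sigma>))"
  proof -
    have "2 * pi / \<sigma> * std_normal_density (a / \<sigma>) = 1 / \<sigma> * (2 * pi / sqrt (2 * pi) * exp (- (a / \<sigma>)\<^sup>2 / 2))"
      by (simp add: std_normal_density_def)
    also have "2 * pi / sqrt (2 * pi) = sqrt (2 * pi)" by (rule real_div_sqrt) simp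
    finally show ?thesis
      by (simp only: scaleR_conv_of_real of_real_mult[symmetric])
  qed
  finally show ?thesis .
qed

lemma gaussian_approx_identity:
  fixes \<phi> :: "real \<Rightarrow> complex"
  assumes cont: "continuous_on UNIV \<phi>" and bound: "\<And>v. cmod (\<phi> v) \<le> H"
    and \<sigma>: "\<And>n. 0 < \<sigma> n" "\<sigma> \<longlonglongrightarrow> 0"
  shows "(\<lambda>n. LINT v|lborel. complex_of_real (std_normal_density ((u - v) / \<sigma> n) / \<sigma> n) * \<phi> v)
           \<longlonglongrightarrow> \<phi> u"
proof -
  have [measurable]: "\<phi> \<in> borel_measurable borel"
    using cont by (rule borel_measurable_continuous_onI)
  have subst: "(LINT v|lborel. complex_of_real (std_normal_density ((u - v) / \<sigma> n) / \<sigma> n) * \<phi> v)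
      = (LINT y|lborel. complex_of_real (std_normal_density y) * \<phi> (u + \<sigma> n * y))" for n
  proof -
    have "(LINT v|lborel. complex_of_real (std_normal_density ((u - v) / \<sigma> n) / \<sigma> n) * \<phi> v)
        = \<bar>\<sigma> n\<bar> *\<^sub>R (LINT y|lborel. complex_of_real (std_normal_density ((u - (u + \<sigma> n * y)) / \<sigma> n) / \<sigma> n)
                                      * \<phi> (u + \<sigma> n * y))"
      using \<sigma>(1)[of n] by (intro lborel_integral_real_affine) simp
    also have "\<dots> = (LINT y|lborel. complex_of_real (std_normal_density y) * \<phi> (u + \<sigma> n * y))"
      using \<sigma>(1)[of n] unfolding integral_scaleR_right[symmetric]
      by (intro Bochner_Integration.integral_cong)
         (simp_all add: std_normal_density_def scaleR_conv_of_real)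
    finally show ?thesis .
  qed
  have "(\<lambda>n. LINT y|lborel. complex_of_real (std_normal_density y) * \<phi> (u + \<sigma> n * y))
      \<longlonglongrightarrow> (LINT y|lborel. complex_of_real (std_normal_density y) * \<phi> u)"
  proof (rule integral_dominated_convergence[where w="\<lambda>y. std_normal_density y * H"])
    show "AE y in lborel. (\<lambda>n. complex_of_real (std_normal_density y) * \<phi> (u + \<sigma> n * y))
        \<longlonglongrightarrow> complex_of_real (std_normal_density y) * \<phi> u"
    proof (intro AE_I2 tendsto_mult tendsto_const)
      fix y
      have "(\<lambda>n. u + \<sigma> n * y) \<longlonglongrightarrow> u"
        using tendsto_add[OF tendsto_const tendsto_mult[OF \<sigma>(2) tendsto_const]] by simp
      then show "(\<lambda>n. \<phi> (u + \<sigma> n * y)) \<longlonglongrightarrow> \<phi> u"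
        using cont by (intro isCont_tendsto_compose[of u \<phi>]) (simp_all add: continuous_on_eq_continuous_at)
    qed
    show "AE y in lborel. norm (complex_of_real (std_normal_density y) * \<phi> (u + \<sigma> n * y))
        \<le> std_normal_density y * H" for n
      using bound by (intro AE_I2) (simp add: norm_mult mult_left_mono)
  qed auto
  then show ?thesis
    unfolding subst by (simp add: integral_complex_of_real)
qed

lemma fourier_integral_gaussian_regularized:
  fixes \<phi> :: "real \<Rightarrow> complex"
  assumes \<phi>: "integrable lborel \<phi>" and \<sigma>: "0 < \<sigma>"
  shows "(LINT \<xi>|lborel. complex_of_real (exp (- (\<sigma>\<^sup>2 * \<xi>\<^sup>2) / 2)) *
            (exp (\<i> * complex_of_real (u * \<xi>)) * fourier_integral \<phi> \<xi>))
       = 2 * pi * (LINT v|lborel. complex_of_real (std_normal_density ((u - v) / \<sigma>) / \<sigma>) * \<phi> v)"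
proof -
  have [measurable]: "\<phi> \<in> borel_measurable borel" using \<phi> by simp
  define G where "G \<xi> v = complex_of_real (exp (- (\<sigma>\<^sup>2 * \<xi>\<^sup>2) / 2)) *
                           (exp (\<i> * complex_of_real ((u - v) * \<xi>)) * \<phi> v)" for \<xi> v
  have "exp (\<i> * complex_of_real ((u - v) * \<xi>))
      = exp (\<i> * complex_of_real (u * \<xi>)) * exp (- (\<i> * complex_of_real (v \<bullet> \<xi>)))" for v \<xi>
    by (simp add: left_diff_distrib right_diff_distrib exp_diff exp_minus divide_inverse)
  then have "complex_of_real (exp (- (\<sigma>\<^sup>2 * \<xi>\<^sup>2) / 2)) *
          (exp (\<i> * complex_of_real (u * \<xi>)) * fourier_integral \<phi> \<xi>) = (LINT v|lborel. G \<xi> v)" for \<xi>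
    unfolding fourier_integral_def G_def integral_mult_right_zero[symmetric]
    by (intro Bochner_Integration.integral_cong) (simp_all add: mult_ac)
  then have "(LINT \<xi>|lborel. complex_of_real (exp (- (\<sigma>\<^sup>2 * \<xi>\<^sup>2) / 2)) *
                (exp (\<i> * complex_of_real (u * \<xi>)) * fourier_integral \<phi> \<xi>))
      = (LINT \<xi>|lborel. LINT v|lborel. G \<xi> v)"
    by simp
  also have "\<dots> = (LINT v|lborel. LINT \<xi>|lborel. G \<xi> v)"
  proof (rule lborel_integral_swap_product_bound)
    show "integrable lborel (\<lambda>\<xi>::real. exp (- (\<sigma>\<^sup>2 * \<xi>\<^sup>2) / 2))"
      using \<sigma> by (rule integrable_gaussian)
    show "cmod (G \<xi> v) \<le> exp (- (\<sigma>\<^sup>2 * \<xi>\<^sup>2) / 2) * cmod (\<phi> v)" for \<xi> v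
      by (simp add: G_def norm_mult)
    show "(\<lambda>(\<xi>, v). G \<xi> v) \<in> borel_measurable borel"
      unfolding G_def borel_prod[symmetric] by measurable
  qed (use \<phi> in simp)
  also have "\<dots> = (LINT v|lborel. complex_of_real (2 * pi / \<sigma> * std_normal_density ((u - v) / \<sigma>)) * \<phi> v)"
    unfolding G_def mult.assoc[symmetric] integral_mult_left_zero integral_gaussian_exp_i_times[OF \<sigma>] ..
  also have "\<dots> = 2 * pi * (LINT v|lborel. complex_of_real (std_normal_density ((u - v) / \<sigma>) / \<sigma>) * \<phi> v)"
    unfolding integral_mult_right_zero[symmetric] by (simp add: mult_ac)
  finally show ?thesis .
qed

lemma tendsto_integral_gaussian_damped:
  fixes \<psi> :: "real \<Rightarrow> complex"
  assumes "integrable lborel \<psi>" and "\<sigma> \<longlonglongrightarrow> 0"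
  shows "(\<lambda>n. LINT \<xi>|lborel. complex_of_real (exp (- ((\<sigma> n)\<^sup>2 * \<xi>\<^sup>2) / 2)) * \<psi> \<xi>)
           \<longlonglongrightarrow> integral\<^sup>L lborel \<psi>"
proof (rule integral_dominated_convergence[where w="\<lambda>\<xi>. cmod (\<psi> \<xi>)"])
  show "AE \<xi> in lborel. (\<lambda>n. complex_of_real (exp (- ((\<sigma> n)\<^sup>2 * \<xi>\<^sup>2) / 2)) * \<psi> \<xi>) \<longlonglongrightarrow> \<psi> \<xi>"
  proof (intro AE_I2)
    fix \<xi>
    have "(\<lambda>n. complex_of_real (exp (- ((\<sigma> n)\<^sup>2 * \<xi>\<^sup>2) / 2)))
        \<longlonglongrightarrow> complex_of_real (exp (- (0\<^sup>2 * \<xi>\<^sup>2) / 2))"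
      by (intro tendsto_intros assms(2)) auto
    from tendsto_mult_right[OF this]
    show "(\<lambda>n. complex_of_real (exp (- ((\<sigma> n)\<^sup>2 * \<xi>\<^sup>2) / 2)) * \<psi> \<xi>) \<longlonglongrightarrow> \<psi> \<xi>"
      by simp
  qed
  show "AE \<xi> in lborel. norm (complex_of_real (exp (- ((\<sigma> n)\<^sup>2 * \<xi>\<^sup>2) / 2)) * \<psi> \<xi>)
      \<le> cmod (\<psi> \<xi>)" for n
    by (intro AE_I2) (simp add: norm_mult mult_left_le_one_le)
qed (use assms(1) in auto)

theorem fourier_inversion_real:
  fixes \<phi> :: "real \<Rightarrow> complex"
  assumes \<phi>: "integrable lborel \<phi>" "continuous_on UNIV \<phi>" "\<And>v. cmod (\<phi> v) \<le> H"
    and F\<phi>: "integrable lborel (fourier_integral \<phi>)"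
  shows "(LINT \<xi>|lborel. exp (\<i> * complex_of_real (u * \<xi>)) * fourier_integral \<phi> \<xi>) = 2 * pi * \<phi> u"
proof -
  have [measurable]: "fourier_integral \<phi> \<in> borel_measurable borel"
    using F\<phi> by simp
  define \<sigma> :: "nat \<Rightarrow> real" where "\<sigma> n = inverse (Suc n)" for n
  have \<sigma>: "0 < \<sigma> n" for n by (simp add: \<sigma>_def)
  have "\<sigma> \<longlonglongrightarrow> 0" unfolding \<sigma>_def by (rule LIMSEQ_inverse_real_of_nat)
  have "integrable lborel (\<lambda>\<xi>. exp (\<i> * complex_of_real (u * \<xi>)) * fourier_integral \<phi> \<xi>)"
    using F\<phi> by (rule Bochner_Integration.integrable_bound) (auto simp: norm_mult)
  from tendsto_integral_gaussian_damped[OF this \<open>\<sigma> \<longlonglongrightarrow> 0\<close>]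
  have "(\<lambda>n. LINT \<xi>|lborel. complex_of_real (exp (- ((\<sigma> n)\<^sup>2 * \<xi>\<^sup>2) / 2)) *
              (exp (\<i> * complex_of_real (u * \<xi>)) * fourier_integral \<phi> \<xi>))
        \<longlonglongrightarrow> (LINT \<xi>|lborel. exp (\<i> * complex_of_real (u * \<xi>)) * fourier_integral \<phi> \<xi>)" .
  moreover have "(\<lambda>n. LINT \<xi>|lborel. complex_of_real (exp (- ((\<sigma> n)\<^sup>2 * \<xi>\<^sup>2) / 2)) *
              (exp (\<i> * complex_of_real (u * \<xi>)) * fourier_integral \<phi> \<xi>))
        \<longlonglongrightarrow> 2 * pi * \<phi> u"
    unfolding fourier_integral_gaussian_regularized[OF \<phi>(1) \<sigma>]
    by (intro tendsto_mult tendsto_const gaussian_approx_identity[OF \<phi>(2,3) \<sigma> \<open>\<sigma> \<longlonglongrightarrow> 0\<close>])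
  ultimately show ?thesis by (rule LIMSEQ_unique)
qed

section \<open>A partial Fourier inversion formula\<close>

lemma lborel_integral_shear:
  fixes g :: "'a::euclidean_space \<Rightarrow> real \<Rightarrow> complex" and p :: "'a \<Rightarrow> real"
  assumes meas: "(\<lambda>(x, v). g x v) \<in> borel_measurable borel" and p: "p \<in> borel_measurable borel"
    and bound: "\<And>x v. cmod (g x v) \<le> F x * H v"
    and F: "integrable lborel F" and H: "integrable lborel H"
  shows "integrable lborel (\<lambda>w. LINT x|lborel. g x (w - p x))"
    and "(LINT w|lborel. LINT x|lborel. g x (w - p x)) = (LINT x|lborel. LINT v|lborel. g x v)"
proof -
  have [measurable]: "(\<lambda>(x, v). g x v) \<in> borel_measurable (lborel \<Otimes>\<^sub>M lborel)" "p \<in> borel_measurable lborel"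
    using meas p by (simp_all add: lborel_prod)
  have bound': "cmod (g x v) \<le> \<bar>F x\<bar> * \<bar>H v\<bar>" for x v
    using bound[of x v] by (simp add: abs_mult[symmetric])
  have g_int: "integrable lborel (g x)" for x
  proof (rule Bochner_Integration.integrable_bound[OF integrable_mult_right[OF integrable_abs[OF H]]])
    show "AE v in lborel. norm (g x v) \<le> norm (\<bar>F x\<bar> * \<bar>H v\<bar>)"
      using bound' by simp
  qed simp
  then have [measurable]: "g x \<in> borel_measurable borel" for x
    by simp
  have sheared: "(LINT w|lborel. g x (w - p x)) = integral\<^sup>L lborel (g x)" for x
    using lborel_integral_translate[of "g x" "- p x"] g_int by simp
  have G_meas: "(\<lambda>(x, w). g x (w - p x)) \<in> borel_measurable borel"
    unfolding borel_prod[symmetric] by measurable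
  have G_int: "integrable lborel (\<lambda>w. g x (w - p x))" for x
    using lborel_integrable_translate[OF g_int, of x "- p x"] by simp
  have G_norm_int: "integrable lborel (\<lambda>x. LINT w|lborel. cmod (g x (w - p x)))"
  proof (rule Bochner_Integration.integrable_bound)
    show "integrable lborel (\<lambda>x. \<bar>F x\<bar> * (LINT v|lborel. \<bar>H v\<bar>))"
      using F by (intro integrable_mult_left integrable_abs)
    have "(LINT w|lborel. cmod (g x (w - p x))) = (LINT v|lborel. cmod (g x v))" for x
      using lborel_integral_translate[of "\<lambda>v. cmod (g x v)" "- p x"] by simp
    also have "\<dots> x \<le> \<bar>F x\<bar> * (LINT v|lborel. \<bar>H v\<bar>)" for x
      using g_int H bound' by (subst integral_mult_right_zero[symmetric]) (intro integral_mono, auto)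
    finally show "AE x in lborel. norm (LINT w|lborel. cmod (g x (w - p x)))
        \<le> norm (\<bar>F x\<bar> * (LINT v|lborel. \<bar>H v\<bar>))"
      by (intro AE_I2) (simp add: integral_nonneg)
  qed measurable
  note swap = lborel_integral_swap[OF G_meas G_int G_norm_int]
  show "integrable lborel (\<lambda>w. LINT x|lborel. g x (w - p x))"
    by (rule swap(1))
  show "(LINT w|lborel. LINT x|lborel. g x (w - p x)) = (LINT x|lborel. LINT v|lborel. g x v)"
    by (simp add: swap(2)[symmetric] sheared)
qed

lemma fourier_integral_shear:
  fixes g :: "'a::euclidean_space \<Rightarrow> real \<Rightarrow> complex" and p :: "'a \<Rightarrow> real"
  assumes meas: "(\<lambda>(x, v). g x v) \<in> borel_measurable borel" and p: "p \<in> borel_measurable borel"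
    and bound: "\<And>x v. cmod (g x v) \<le> F x * H v"
    and F: "integrable lborel F" and H: "integrable lborel H"
  shows "fourier_integral (\<lambda>w. LINT x|lborel. g x (w - p x)) \<xi>
           = (LINT v|lborel. LINT x|lborel. exp (- (\<i> * complex_of_real ((v + p x) * \<xi>))) * g x v)"
proof -
  have [measurable]: "(\<lambda>(x, v). g x v) \<in> borel_measurable (lborel \<Otimes>\<^sub>M lborel)" "p \<in> borel_measurable lborel"
    using meas p by (simp_all add: lborel_prod)
  define g' where "g' x v = exp (- (\<i> * complex_of_real ((v + p x) * \<xi>))) * g x v" for x v
  have g': "(\<lambda>(x, v). g' x v) \<in> borel_measurable borel" "cmod (g' x v) \<le> F x * H v" for x v
    unfolding g'_def borel_prod[symmetric] using bound by (measurable, simp add: norm_mult norm_exp_minus_i_times)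
  have "fourier_integral (\<lambda>w. LINT x|lborel. g x (w - p x)) \<xi> = (LINT w|lborel. LINT x|lborel. g' x (w - p x))"
    unfolding fourier_integral_def g'_def integral_mult_left_zero[symmetric]
    by (simp add: mult.commute)
  also have "\<dots> = (LINT x|lborel. LINT v|lborel. g' x v)"
    by (rule lborel_integral_shear(2)[OF g'(1) p g'(2) F H])
  also have "\<dots> = (LINT v|lborel. LINT x|lborel. g' x v)"
    by (rule lborel_integral_swap_product_bound[OF g'(1) F H g'(2)])
  finally show ?thesis by (simp add: g'_def)
qed

context
  fixes f :: "real^'n::finite \<Rightarrow> complex" and h :: "real \<Rightarrow> complex"
    and c :: "real \<Rightarrow> real^'n" and i :: 'n
  assumes sf: "schwartz_vec f" and sh: "schwartz_R h"
    and c: "continuous_on UNIV c" and c_i: "\<And>v. c v $ i = 0"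
begin

definition modulated_product :: "real^'n \<Rightarrow> real \<Rightarrow> complex" where
  "modulated_product x v = f x * exp (- (\<i> * complex_of_real (x \<bullet> c v))) * h v"

definition sheared_integral :: "real \<Rightarrow> complex" where
  "sheared_integral w = (LINT x|lborel. modulated_product x (w - x $ i))"

lemma schwartz_pair_continuous: "continuous_on UNIV f" "continuous_on UNIV h"
  using sf sh by (simp_all add: schwartz_vec_continuous schwartz_R_continuous)

lemma schwartz_pair_borel_measurable [measurable]:
  "f \<in> borel_measurable borel" "h \<in> borel_measurable borel" "c \<in> borel_measurable borel"
  using schwartz_pair_continuous c by (simp_all add: borel_measurable_continuous_onI)

lemma borel_measurable_modulated_product [measurable]:
  "(\<lambda>(x, v). modulated_product x v) \<in> borel_measurable borel"
  unfolding modulated_product_def borel_prod[symmetric] by measurable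

lemma norm_modulated_product: "cmod (modulated_product x v) = cmod (f x) * cmod (h v)"
  by (simp add: modulated_product_def norm_mult norm_exp_minus_i_times)

lemma schwartz_pair_integrable_norm:
  "integrable lborel (\<lambda>x. cmod (f x))" "integrable lborel (\<lambda>v. cmod (h v))"
  using schwartz_vec_integrable[OF sf] schwartz_R_integrable[OF sh] by simp_all

lemma sheared_integral_integrable: "integrable lborel sheared_integral"
  unfolding sheared_integral_def[abs_def]
proof (rule lborel_integral_shear(1)[OF borel_measurable_modulated_product _
      eq_refl[OF norm_modulated_product] schwartz_pair_integrable_norm])
  show "(\<lambda>x::real^'n. x $ i) \<in> borel_measurable borel" by measurable
qed

lemma sheared_integral_continuous: "continuous_on UNIV sheared_integral"
proof -
  obtain H where H: "\<And>v. cmod (h v) \<le> H" using schwartz_R_bounded[OF sh] by blast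
  show ?thesis
    unfolding sheared_integral_def[abs_def]
  proof (rule continuous_on_lborel_integral_param[where B="\<lambda>x. cmod (f x) * H"])
    show "(\<lambda>x. modulated_product x (w - x $ i)) \<in> borel_measurable lborel" for w
      unfolding modulated_product_def by measurable
    show "continuous_on UNIV (\<lambda>w. modulated_product x (w - x $ i))" for x
      unfolding modulated_product_def
      by (intro continuous_intros continuous_on_compose2[OF c] continuous_on_compose2[OF schwartz_pair_continuous(2)])
         auto
    show "cmod (modulated_product x (w - x $ i)) \<le> cmod (f x) * H" for w x
      unfolding norm_modulated_product by (intro mult_left_mono H) simp
  qed (use schwartz_pair_integrable_norm in simp)
qed

lemma sheared_integral_bounded:
  obtains B where "\<And>w. cmod (sheared_integral w) \<le> B"
proof -
  obtain H where H: "\<And>v. cmod (h v) \<le> H" using schwartz_R_bounded[OF sh] by blast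
  have "0 \<le> H" using H[of 0] by (simp add: order_trans[OF norm_ge_zero])
  have "cmod (sheared_integral w) \<le> (LINT x|lborel. cmod (modulated_product x (w - x $ i)))" for w
    unfolding sheared_integral_def by (rule integral_norm_bound)
  also have "\<dots> w \<le> (LINT x|lborel. cmod (f x) * H)" for w
    using schwartz_pair_integrable_norm \<open>0 \<le> H\<close>
    by (intro integral_mono') (auto simp: norm_modulated_product intro: mult_left_mono H)
  finally show thesis by (rule that)
qed

lemma fourier_integral_sheared_integral:
  "fourier_integral sheared_integral \<xi>
     = (LINT v|lborel. exp (- (\<i> * complex_of_real (v * \<xi>))) * fourier_integral f (axis i \<xi> + c v) * h v)"
proof -
  have "(\<lambda>x::real^'n. x $ i) \<in> borel_measurable borel" by measurable
  note shear = fourier_integral_shear[OF borel_measurable_modulated_product this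
      eq_refl[OF norm_modulated_product] schwartz_pair_integrable_norm]
  show ?thesis
    unfolding sheared_integral_def[abs_def] shear
  proof (rule Bochner_Integration.integral_cong[OF refl])
    fix v
    let ?E = "\<lambda>r. exp (- (\<i> * complex_of_real r))"
    have E_add: "?E a * ?E b = ?E (a + b)" for a b
      by (simp add: exp_add[symmetric] distrib_left)
    have "?E ((v + x $ i) * \<xi>) * modulated_product x v
        = ?E (v * \<xi>) * (f x * ?E (x \<bullet> (axis i \<xi> + c v))) * h v" for x
    proof -
      have "?E ((v + x $ i) * \<xi>) * modulated_product x v
          = f x * (?E ((v + x $ i) * \<xi>) * ?E (x \<bullet> c v)) * h v"
        by (simp add: modulated_product_def mult_ac)
      also have "?E ((v + x $ i) * \<xi>) * ?E (x \<bullet> c v) = ?E (v * \<xi>) * ?E (x \<bullet> (axis i \<xi> + c v))"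
        unfolding E_add by (simp add: inner_add_right inner_axis algebra_simps)
      finally show ?thesis by (simp add: mult_ac)
    qed
    then show "(LINT x|lborel. ?E ((v + x $ i) * \<xi>) * modulated_product x v)
        = ?E (v * \<xi>) * fourier_integral f (axis i \<xi> + c v) * h v"
      unfolding fourier_integral_def integral_mult_left_zero[symmetric] integral_mult_right_zero[symmetric]
      by simp
  qed
qed

lemma integrable_fourier_integral_sheared_integral:
  "integrable lborel (fourier_integral sheared_integral)"
proof -
  have [measurable]: "sheared_integral \<in> borel_measurable borel"
    using sheared_integral_continuous by (rule borel_measurable_continuous_onI)
  obtain C where C: "\<And>\<eta>. cmod (fourier_integral f \<eta>) \<le> C / (1 + \<bar>\<eta> $ i\<bar>)\<^sup>2"
    using schwartz_vec_fourier_decay[OF sf] by blast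
  have "0 \<le> C" using C[of 0] by (simp add: order_trans[OF norm_ge_zero])
  show ?thesis
  proof (rule lborel_integrable_of_decay)
    show "fourier_integral sheared_integral \<in> borel_measurable borel"
      unfolding fourier_integral_def by measurable
    fix \<xi> :: real
    have "cmod (fourier_integral sheared_integral \<xi>)
        \<le> (LINT v|lborel. cmod (exp (- (\<i> * complex_of_real (v * \<xi>))) * fourier_integral f (axis i \<xi> + c v) * h v))"
      unfolding fourier_integral_sheared_integral by (rule integral_norm_bound)
    also have "\<dots> \<le> (LINT v|lborel. C / (1 + \<bar>\<xi>\<bar>)\<^sup>2 * cmod (h v))"
    proof (rule integral_mono')
      fix v
      have "cmod (fourier_integral f (axis i \<xi> + c v)) \<le> C / (1 + \<bar>\<xi>\<bar>)\<^sup>2"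
        using C[of "axis i \<xi> + c v"] c_i[of v] by simp
      then show "cmod (exp (- (\<i> * complex_of_real (v * \<xi>))) * fourier_integral f (axis i \<xi> + c v) * h v)
          \<le> C / (1 + \<bar>\<xi>\<bar>)\<^sup>2 * cmod (h v)"
        by (simp add: norm_mult norm_exp_minus_i_times mult_right_mono del: times_divide_eq_left)
      show "0 \<le> C / (1 + \<bar>\<xi>\<bar>)\<^sup>2 * cmod (h v)"
        using \<open>0 \<le> C\<close> by simp
    qed (use schwartz_pair_integrable_norm in simp)
    also have "\<dots> = (C * (LINT v|lborel. cmod (h v))) * inverse ((1 + norm \<xi>) ^ (2 * DIM(real)))"
      by (simp add: field_simps power2_eq_square)
    finally show "norm (fourier_integral sheared_integral \<xi>)
        \<le> (C * (LINT v|lborel. cmod (h v))) * inverse ((1 + norm \<xi>) ^ (2 * DIM(real)))" .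
  qed
qed

theorem fourier_integral_partial_inversion:
  "(LINT \<xi>|lborel. LINT v|lborel.
      exp (\<i> * complex_of_real ((u - v) * \<xi>)) * fourier_integral f (axis i \<xi> + c v) * h v)
   = 2 * pi * (LINT x|lborel. f x * exp (- (\<i> * complex_of_real (x \<bullet> c (u - x $ i)))) * h (u - x $ i))"
proof -
  obtain B where "\<And>w. cmod (sheared_integral w) \<le> B" using sheared_integral_bounded by blast
  then have "(LINT \<xi>|lborel. exp (\<i> * complex_of_real (u * \<xi>)) * fourier_integral sheared_integral \<xi>)
      = 2 * pi * sheared_integral u"
    by (intro fourier_inversion_real sheared_integral_integrable sheared_integral_continuous
        integrable_fourier_integral_sheared_integral)
  moreover have "exp (\<i> * complex_of_real ((u - v) * \<xi>))
      = exp (\<i> * complex_of_real (u * \<xi>)) * exp (- (\<i> * complex_of_real (v * \<xi>)))" for v \<xi>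
    by (simp add: left_diff_distrib right_diff_distrib exp_diff exp_minus divide_inverse)
  ultimately show ?thesis
    unfolding fourier_integral_sheared_integral integral_mult_right_zero[symmetric]
    by (simp add: mult.assoc sheared_integral_def modulated_product_def)
qed

end

section \<open>The Engel group\<close>

lemma vector_4 [simp]:
  "(vector [a, b, c, d] :: 'a::zero^4) $ 1 = a"
  "(vector [a, b, c, d] :: 'a^4) $ 2 = b"
  "(vector [a, b, c, d] :: 'a^4) $ 3 = c"
  "(vector [a, b, c, d] :: 'a^4) $ 4 = d"
  unfolding vector_def by simp_all

lemma inner_vector_4:
  fixes x :: "real^4"
  shows "x \<bullet> vector [a, b, c, d] = x $ 1 * a + x $ 2 * b + x $ 3 * c + x $ 4 * d"
  by (simp add: inner_vec_def sum_4)

lemma axis_1_plus_vector_4: "axis 1 a + vector [0, b, c, d] = (vector [a, b, c, d] :: real^4)"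
  by (simp add: vec_eq_iff forall_4 axis_def)

lemma continuous_on_vector_4 [continuous_intros]:
  fixes a b c d :: "'b::topological_space \<Rightarrow> real"
  assumes "continuous_on S a" "continuous_on S b" "continuous_on S c" "continuous_on S d"
  shows "continuous_on S (\<lambda>v. vector [a v, b v, c v, d v] :: real^4)"
proof -
  have "continuous_on S (\<lambda>v. \<chi> j. (vector [a v, b v, c v, d v] :: real^4) $ j)"
  proof (rule continuous_on_vec_lambda)
    fix j :: 4
    show "continuous_on S (\<lambda>v. (vector [a v, b v, c v, d v] :: real^4) $ j)"
      using exhaust_4[of j] assms by (elim disjE) simp_all
  qed
  then show ?thesis by simp
qed

lemma engel_pi_adj_apply:
  "engel_pi_adj lam mu x h u =
     exp (\<i> * complex_of_real ((mu / (2 * lam)) * x$2 - lam * x$4 + lam * x$3 * (u - x$1)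
                               - (lam / 2) * x$2 * (u - x$1)\<^sup>2)) * h (u - x$1)"
proof -
  define A where "A u = - (mu / (2 * lam)) * x$2 + lam * x$4 - lam * x$3 * u + (lam / 2) * x$2 * u\<^sup>2" for u
  have \<pi>: "engel_pi lam mu x g = (\<lambda>u. exp (\<i> * complex_of_real (A u)) * g (u + x$1))" for g
    by (simp add: engel_pi_def A_def fun_eq_iff)
  have "inj (engel_pi lam mu x)"
  proof (rule injI)
    fix g1 g2 :: "real \<Rightarrow> complex"
    assume "engel_pi lam mu x g1 = engel_pi lam mu x g2"
    then have "g1 (u + x$1) = g2 (u + x$1)" for u
      unfolding \<pi> fun_eq_iff by (simp add: mult_left_cancel)
    from this[of "v - x$1" for v] show "g1 = g2"
      by (simp add: fun_eq_iff)
  qed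
  moreover have "engel_pi lam mu x (\<lambda>u. exp (\<i> * complex_of_real (- A (u - x$1))) * h (u - x$1)) = h"
    unfolding \<pi> by (simp add: fun_eq_iff mult.assoc flip: exp_add distrib_left of_real_add)
  ultimately have "engel_pi_adj lam mu x h = (\<lambda>u. exp (\<i> * complex_of_real (- A (u - x$1))) * h (u - x$1))"
    unfolding engel_pi_adj_def by (simp add: inv_f_eq)
  then show ?thesis
    by (simp add: A_def algebra_simps)
qed

lemma engel_symbol_integral:
  assumes "schwartz_vec f" and "schwartz_R h"
  shows "(LINT \<xi>|lborel. LINT v|lborel. exp (\<i> * complex_of_real ((u - v) * \<xi>)) *
            fourier4 f (vector [\<xi>, (lam / 2) * v\<^sup>2 - mu / (2 * lam), - lam * v, lam]) * h v)
       = complex_of_real (1 / (2 * pi)) *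
           (LINT x|lborel. f x *
              exp (\<i> * complex_of_real ((mu / (2 * lam)) * x$2 - lam * x$4 + lam * x$3 * (u - x$1)
                                        - (lam / 2) * x$2 * (u - x$1)\<^sup>2)) * h (u - x$1))"
proof -
  define c :: "real \<Rightarrow> real^4" where "c v = vector [0, (lam / 2) * v\<^sup>2 - mu / (2 * lam), - lam * v, lam]" for v
  have c: "continuous_on UNIV c" "\<And>v. c v $ 1 = 0"
    unfolding c_def by (auto intro!: continuous_intros)
  have phase: "- (x \<bullet> c (u - x$1)) = (mu / (2 * lam)) * x$2 - lam * x$4 + lam * x$3 * (u - x$1)
                                       - (lam / 2) * x$2 * (u - x$1)\<^sup>2" for x
    by (simp add: c_def inner_vector_4 algebra_simps)
  have "(LINT \<xi>|lborel. LINT v|lborel. exp (\<i> * complex_of_real ((u - v) * \<xi>)) *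
            fourier4 f (vector [\<xi>, (lam / 2) * v\<^sup>2 - mu / (2 * lam), - lam * v, lam]) * h v)
      = complex_of_real ((2 * pi) powi (-2)) * (LINT \<xi>|lborel. LINT v|lborel.
          exp (\<i> * complex_of_real ((u - v) * \<xi>)) * fourier_integral f (axis 1 \<xi> + c v) * h v)"
    unfolding c_def axis_1_plus_vector_4 fourier4_def fourier_integral_def[symmetric]
      integral_mult_right_zero[symmetric]
    by (simp add: mult_ac)
  also have "\<dots> = complex_of_real ((2 * pi) powi (-2)) * (2 * pi *
      (LINT x|lborel. f x *
              exp (\<i> * complex_of_real ((mu / (2 * lam)) * x$2 - lam * x$4 + lam * x$3 * (u - x$1)
                                        - (lam / 2) * x$2 * (u - x$1)\<^sup>2)) * h (u - x$1)))"
    unfolding phase[symmetric] fourier_integral_partial_inversion[OF assms c] by simp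
  also have "complex_of_real ((2 * pi) powi (-2)) * (2 * pi * X) = complex_of_real (1 / (2 * pi)) * X"
    for X :: complex
    by (simp add: power_int_minus power2_eq_square field_simps)
  finally show ?thesis .
qed

theorem mainTheorem1:
  fixes f :: "real^4 \<Rightarrow> complex" and h :: "real \<Rightarrow> complex"
    and lam mu u :: real
  assumes "schwartz_vec f" and "schwartz_R h" and "lam \<noteq> 0"
  shows "engel_FT f lam mu h u =
           (LINT x|lborel. f x *
              exp (\<i> * complex_of_real ((mu / (2 * lam)) * x$2 - lam * x$4 + lam * x$3 * (u - x$1)
                                        - (lam / 2) * x$2 * (u - x$1)\<^sup>2)) * h (u - x$1))
       \<and> (LINT x|lborel. f x *
              exp (\<i> * complex_of_real ((mu / (2 * lam)) * x$2 - lam * x$4 + lam * x$3 * (u - x$1)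
                                        - (lam / 2) * x$2 * (u - x$1)\<^sup>2)) * h (u - x$1))
         = complex_of_real (2 * pi) *
             (LINT \<xi>|lborel. (LINT v|lborel.
                exp (\<i> * complex_of_real ((u - v) * \<xi>)) *
                fourier4 f (vector [\<xi>, (lam / 2) * v\<^sup>2 - mu / (2 * lam), - lam * v, lam]) * h v))
       \<and> engel_FT f lam mu h u = KN_Op (engel_symbol f lam mu) h u"
proof -
  define R where "R = (LINT \<xi>|lborel. (LINT v|lborel.
                exp (\<i> * complex_of_real ((u - v) * \<xi>)) *
                fourier4 f (vector [\<xi>, (lam / 2) * v\<^sup>2 - mu / (2 * lam), - lam * v, lam]) * h v))"
  have "engel_FT f lam mu h u =
           (LINT x|lborel. f x *
              exp (\<i> * complex_of_real ((mu / (2 * lam)) * x$2 - lam * x$4 + lam * x$3 * (u - x$1)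
                                        - (lam / 2) * x$2 * (u - x$1)\<^sup>2)) * h (u - x$1))"
    unfolding engel_FT_def by (simp add: engel_pi_adj_apply mult.assoc)
  moreover have "KN_Op (engel_symbol f lam mu) h u = complex_of_real (2 * pi) * R"
    unfolding KN_Op_def engel_symbol_def R_def integral_mult_right_zero[symmetric]
    by (simp add: power2_eq_square mult_ac)
  ultimately show ?thesis
    using engel_symbol_integral[OF assms(1,2), of u lam mu] by (simp add: R_def)
qed

end
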